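(* Let $N\ge2$, $\sigma^*\in\mathbb{R}^d_{>0}$ with $\sigma_1^*=\max_k\sigma_k^*$, and consider the recursion $$\sigma_i(t+1)=\sigma_i(t)\Big(1+\frac{\eta}{N}\sigma_i(t)^{1-\frac2N}(\sigma_i^*-\sigma_i(t))\Big)^N,$$ with $0\le\sigma_i(0)<\sigma_i^*$. If $\eta\le(1/\sigma_1^* )^{2-\frac2N}$, then $\sigma_i(t)\le\sigma_i^*$ for all $t\ge0$.
   Context: This recursion is gradient descent with learning rate $\eta$ on $\ell_N(w)=\frac{1}{2N^2}\|w^N-\sigma^*\|^2$ over nonnegative weights $w$, written in terms of $\sigma_i=w_i^N$. *)

theory Defs
  imports Complex_Main
begin

end

theory Submission
  imports Defs
begin

text \<open>
  In the weight \<open>w = \<sigma>^(1/N)\<close> the recursion is a plain gradient-descent step,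
  \<open>\<sigma>' = w'^N\<close> with \<open>w' = w + (\<eta>/N) w^(N-1) (\<sigma>\<^sup>* - w^N)\<close>.
  Let \<open>b = (\<sigma>\<^sup>*)^(1/N)\<close>. For \<open>0 \<le> w \<le> b\<close> we have \<open>\<sigma>\<^sup>* - w^N \<le> N b^(N-1) (b - w)\<close>
  and \<open>w^(N-1) \<le> b^(N-1)\<close>, so the step increases \<open>w\<close> by at most \<open>\<eta> b^(2N-2) (b - w)\<close>.
  The learning-rate bound gives \<open>\<eta> b^(2N-2) \<le> 1\<close> in every coordinate, so \<open>w\<close> never
  overshoots \<open>b\<close>, and by induction each \<open>\<sigma>\<^sub>i(t)\<close> stays in \<open>[0, \<sigma>\<^sub>i\<^sup>*]\<close>.
\<close>

definition gd_update :: "nat \<Rightarrow> real \<Rightarrow> real \<Rightarrow> real \<Rightarrow> real" where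
  "gd_update N eta a x = x * (1 + eta / real N * x powr (1 - 2 / real N) * (a - x)) ^ N"

lemma power_diff_le_mult_diff:
  fixes w b :: real
  assumes "0 \<le> w" "w \<le> b"
  shows "b ^ n - w ^ n \<le> real n * b ^ (n - 1) * (b - w)"
proof -
  have "b ^ n - w ^ n = (b - w) * (\<Sum>i<n. w ^ (n - Suc i) * b ^ i)"
    by (rule power_diff_sumr2)
  also have "\<dots> \<le> (b - w) * (\<Sum>i<n. b ^ (n - 1))"
  proof (intro mult_left_mono sum_mono)
    fix i assume "i \<in> {..<n}"
    then have "b ^ (n - 1) = b ^ (n - Suc i) * b ^ i"
      by (simp add: power_add [symmetric])
    then show "w ^ (n - Suc i) * b ^ i \<le> b ^ (n - 1)"
      using assms by (simp add: mult_right_mono power_mono)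
  qed (use assms in simp)
  finally show ?thesis by (simp add: algebra_simps)
qed

lemma gradient_step_le_of_lr_bound:
  fixes w b c :: real
  assumes "0 \<le> w" "w \<le> b" "0 \<le> c" and lr: "c * real n * b ^ (2 * (n - 1)) \<le> 1"
  shows "w + c * w ^ (n - 1) * (b ^ n - w ^ n) \<le> b"
proof -
  have "c * w ^ (n - 1) * (b ^ n - w ^ n) \<le> c * b ^ (n - 1) * (real n * b ^ (n - 1) * (b - w))"
    using assms power_diff_le_mult_diff [OF assms(1,2), of n]
    by (intro mult_mono mult_left_mono power_mono) (auto simp: power_mono)
  also have "\<dots> = (c * real n * b ^ (2 * (n - 1))) * (b - w)"
    by (simp add: mult_2 power_add)
  also have "\<dots> \<le> b - w"
    using lr assms by (simp add: mult_left_le_one_le)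
  finally show ?thesis by simp
qed

lemma powr_eq_root_power:
  assumes "x > 0" "N > 0"
  shows "x powr (real k / real N) = root N x ^ k"
  using assms by (simp add: root_powr_inverse powr_realpow [symmetric] powr_powr)

lemma mult_powr_le_one_of_le_inverse_powr:
  fixes eta a s p :: real
  assumes "0 \<le> eta" "0 \<le> a" "a \<le> s" "0 \<le> p" "eta \<le> (1 / s) powr p"
  shows "eta * a powr p \<le> 1"
proof -
  have "eta * a powr p \<le> (1 / s) powr p * s powr p"
    using assms by (intro mult_mono powr_mono2) auto
  also have "\<dots> \<le> 1"
    using assms by (cases "s = 0") (simp_all add: powr_divide)
  finally show ?thesis .
qed

lemma gd_update_nonneg:
  assumes "0 \<le> eta" "0 \<le> x" "x \<le> a"
  shows "0 \<le> gd_update N eta a x"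
  using assms unfolding gd_update_def by simp

lemma gd_update_eq_root_step:
  fixes N :: nat and eta a x :: real
  assumes N: "N \<ge> 2" and "0 < x"
  shows "gd_update N eta a x = (root N x + eta / real N * root N x ^ (N - 1) * (a - x)) ^ N"
proof -
  define w where "w = root N x"
  have "x = w ^ N"
    using assms by (simp add: w_def)
  moreover have "x powr (1 - 2 / real N) = w ^ (N - 2)"
    using powr_eq_root_power [OF \<open>x > 0\<close>, of N "N - 2"] N unfolding w_def
    by (simp add: of_nat_diff divide_simps)
  ultimately have "gd_update N eta a x = (w * (1 + eta / real N * w ^ (N - 2) * (a - x))) ^ N"
    by (simp add: gd_update_def power_mult_distrib)
  also have "w * (1 + eta / real N * w ^ (N - 2) * (a - x))
      = w + eta / real N * (w * w ^ (N - 2)) * (a - x)"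
    by (simp add: algebra_simps)
  also have "w * w ^ (N - 2) = w ^ (N - 1)"
    using N by (simp flip: power_Suc add: Suc_diff_Suc numeral_2_eq_2)
  finally show ?thesis
    unfolding w_def .
qed

lemma gd_update_le:
  fixes N :: nat and eta a x :: real
  assumes N: "N \<ge> 2" and "0 \<le> eta" "0 \<le> x" "x \<le> a"
    and lr: "eta * a powr (2 - 2 / real N) \<le> 1"
  shows "gd_update N eta a x \<le> a"
proof (cases "x = 0")
  case True
  then show ?thesis using assms by (simp add: gd_update_def)
next
  case False
  then have "x > 0" using assms by simp
  define w b c where "w = root N x" and "b = root N a" and "c = eta / real N"
  have "0 \<le> w" "w \<le> b" "0 \<le> c" and wN: "w ^ N = x" and bN: "b ^ N = a"
    using assms by (auto simp: w_def b_def c_def)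
  have step: "gd_update N eta a x = (w + c * w ^ (N - 1) * (b ^ N - w ^ N)) ^ N"
    unfolding wN bN unfolding w_def c_def by (rule gd_update_eq_root_step [OF N \<open>x > 0\<close>])
  have "a powr (2 - 2 / real N) = b ^ (2 * (N - 1))"
    using powr_eq_root_power [of a N "2 * (N - 1)"] \<open>x > 0\<close> assms unfolding b_def
    by (simp add: of_nat_diff divide_simps)
  then have "c * real N * b ^ (2 * (N - 1)) \<le> 1"
    using lr N by (simp add: c_def)
  then have "w + c * w ^ (N - 1) * (b ^ N - w ^ N) \<le> b"
    using gradient_step_le_of_lr_bound \<open>0 \<le> w\<close> \<open>w \<le> b\<close> \<open>0 \<le> c\<close> by blast
  moreover have "0 \<le> w + c * w ^ (N - 1) * (b ^ N - w ^ N)"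
    using \<open>0 \<le> w\<close> \<open>w \<le> b\<close> \<open>0 \<le> c\<close> by (simp add: power_mono)
  ultimately have "(w + c * w ^ (N - 1) * (b ^ N - w ^ N)) ^ N \<le> b ^ N"
    by (rule power_mono)
  then show ?thesis
    unfolding step bN .
qed

theorem lemma1:
  fixes N d :: nat and eta :: real
    and sstar :: "nat \<Rightarrow> real" and sigma :: "nat \<Rightarrow> nat \<Rightarrow> real"
  assumes N: "N \<ge> 2"
    and d: "d \<ge> 1"
    and pos: "\<forall>i\<in>{1..d}. sstar i > 0"
    and max1: "sstar 1 = Max (sstar ` {1..d})"
    and init: "\<forall>i\<in>{1..d}. 0 \<le> sigma 0 i \<and> sigma 0 i < sstar i"
    and rec: "\<forall>t. \<forall>i\<in>{1..d}. sigma (Suc t) i =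
       sigma t i * (1 + eta / real N * sigma t i powr (1 - 2 / real N) * (sstar i - sigma t i)) ^ N"
    and eta_pos: "eta > 0"
    and eta_le: "eta \<le> (1 / sstar 1) powr (2 - 2 / real N)"
  shows "\<forall>t. \<forall>i\<in>{1..d}. sigma t i \<le> sstar i"
proof (intro allI ballI)
  fix t i assume i: "i \<in> {1..d}"
  have "0 < sstar i" "sstar i \<le> sstar 1"
    using i pos max1 by simp_all
  moreover have "0 \<le> 2 - 2 / real N"
    using N by (simp add: field_simps)
  ultimately have lr: "eta * sstar i powr (2 - 2 / real N) \<le> 1"
    using eta_pos eta_le by (intro mult_powr_le_one_of_le_inverse_powr) auto
  have "0 \<le> sigma t i \<and> sigma t i \<le> sstar i"
  proof (induction t)
    case 0
    then show ?case using init i by fastforce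
  next
    case (Suc t)
    have "sigma (Suc t) i = gd_update N eta (sstar i) (sigma t i)"
      using rec i by (simp add: gd_update_def)
    moreover have "0 \<le> gd_update N eta (sstar i) (sigma t i)"
      using Suc eta_pos by (intro gd_update_nonneg) auto
    moreover have "gd_update N eta (sstar i) (sigma t i) \<le> sstar i"
      using Suc eta_pos by (intro gd_update_le [OF N _ _ _ lr]) auto
    ultimately show ?case by simp
  qed
  then show "sigma t i \<le> sstar i" ..
qed

end
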